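(* There exist a finite or countable subset $Y_0\subseteq Y$ and a measurable partition $(\Omega_y)_{y\in Y_0}$ of $\Omega$ such that $L_{\xi,y}(y)>0$ for every $y\in Y_0$ and every $\xi\in\Omega_y$.
   Context: Let $G$ be a metrizable, $\sigma$-compact locally compact abelian group (written additively) with Haar measure $\nu$, and $(Y,\lambda)$ a $\sigma$-finite measure space with $L^2(G,\nu)$, $L^2(Y,\lambda)$ separable. Let $H$ be a reproducing kernel Hilbert space of complex functions on $G\times Y$ whose inner product is that of $L^2(G\times Y,\nu\otimes\lambda)$, with reproducing kernel $(K_{x,y})_{(x,y)\in G\times Y}$. Assume $K_{x,y}(u,v)=K_{0,y}(u-x,v)$ for all $u,x\in G$, $v,y\in Y$, and $\sup_{v\in Y}\int_G|K_{0,y}(u,v)|\,d\nu(u)<\infty$ for every $y\in Y$. Let $\widehat G$ be the dual group. Define $L_{\xi,y}(v)=\int_G K_{0,y}(u,v)\overline{\xi(u)}\,d\nu(u)$ for $\xi\in\widehat G$, $y,v\in Y$, and $\Omega=\{\xi\in\widehat G:\exists y\in Y,\ L_{\xi,y}(y)>0\}$. *)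

theory Defs
  imports "HOL-Analysis.Analysis"
begin

definition metrizable_sigma_compact_lca :: "'g::{ab_group_add, metric_space} itself \<Rightarrow> bool" where
  "metrizable_sigma_compact_lca _ \<longleftrightarrow>
     continuous_on UNIV (\<lambda>p::'g \<times> 'g. fst p + snd p) \<and>
     continuous_on UNIV (\<lambda>a::'g. - a) \<and>
     (\<forall>x::'g. \<exists>U K. open U \<and> compact K \<and> x \<in> U \<and> U \<subseteq> K) \<and>
     (\<exists>C::nat \<Rightarrow> 'g set. (\<forall>n. compact (C n)) \<and> (\<Union>n. C n) = UNIV)"

text \<open>Haar measure: a nonzero translation invariant Borel measure, finite on compact
  sets and positive on nonempty open sets (on a sigma-compact metrizable locally compact
  space such a measure is automatically Radon).\<close>

definition haar_measure :: "'g::{ab_group_add, metric_space} measure \<Rightarrow> bool" where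
  "haar_measure nu \<longleftrightarrow>
     sets nu = sets borel \<and>
     (\<forall>x A. A \<in> sets borel \<longrightarrow> emeasure nu ((\<lambda>a. x + a) ` A) = emeasure nu A) \<and>
     (\<forall>K. compact K \<longrightarrow> emeasure nu K < \<infinity>) \<and>
     (\<forall>U. open U \<and> U \<noteq> {} \<longrightarrow> emeasure nu U > 0)"

definition square_integrable :: "'a measure \<Rightarrow> ('a \<Rightarrow> complex) \<Rightarrow> bool" where
  "square_integrable M f \<longleftrightarrow> f \<in> borel_measurable M \<and> integrable M (\<lambda>x. (cmod (f x))\<^sup>2)"

definition L2_separable :: "'a measure \<Rightarrow> bool" where
  "L2_separable M \<longleftrightarrow>
     (\<exists>D. countable D \<and> (\<forall>d\<in>D. square_integrable M d) \<and>
        (\<forall>f. square_integrable M f \<longrightarrow>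
           (\<forall>e>0. \<exists>d\<in>D. (\<integral>x. (cmod (f x - d x))\<^sup>2 \<partial>M) < e)))"

definition L2_inner :: "'a measure \<Rightarrow> ('a \<Rightarrow> complex) \<Rightarrow> ('a \<Rightarrow> complex) \<Rightarrow> complex" where
  "L2_inner M f g = (\<integral>x. f x * cnj (g x) \<partial>M)"

text \<open>\<open>H\<close> is a Hilbert space of (genuine) complex functions on the space of \<open>M\<close>,
  with the inner product of \<open>L\<^sup>2(M)\<close>, and \<open>K\<close> is its reproducing kernel.\<close>

definition rkhs_in_L2 :: "'a measure \<Rightarrow> ('a \<Rightarrow> complex) set \<Rightarrow> ('a \<Rightarrow> 'a \<Rightarrow> complex) \<Rightarrow> bool" where
  "rkhs_in_L2 M H K \<longleftrightarrow>
     (\<forall>f\<in>H. square_integrable M f) \<and>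
     (\<lambda>_. 0) \<in> H \<and>
     (\<forall>f\<in>H. \<forall>g\<in>H. (\<lambda>x. f x + g x) \<in> H) \<and>
     (\<forall>f\<in>H. \<forall>c::complex. (\<lambda>x. c * f x) \<in> H) \<and>
     \<comment> \<open>completeness w.r.t. the L^2 norm\<close>
     (\<forall>s::nat \<Rightarrow> 'a \<Rightarrow> complex. (\<forall>n. s n \<in> H) \<longrightarrow>
        (\<forall>e>0. \<exists>N. \<forall>m\<ge>N. \<forall>n\<ge>N. (\<integral>x. (cmod (s m x - s n x))\<^sup>2 \<partial>M) < e) \<longrightarrow>
        (\<exists>f\<in>H. (\<lambda>n. \<integral>x. (cmod (s n x - f x))\<^sup>2 \<partial>M) \<longlonglongrightarrow> 0)) \<and>
     \<comment> \<open>reproducing kernel\<close>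
     (\<forall>p\<in>space M. K p \<in> H) \<and>
     (\<forall>f\<in>H. \<forall>p\<in>space M. f p = L2_inner M f (K p))"

definition dual_group :: "('g::{ab_group_add, metric_space} \<Rightarrow> complex) set" where
  "dual_group = {\<xi>. continuous_on UNIV \<xi> \<and> (\<forall>a. cmod (\<xi> a) = 1) \<and>
                    (\<forall>a b. \<xi> (a + b) = \<xi> a * \<xi> b)}"

definition dual_topology :: "('g::{ab_group_add, metric_space} \<Rightarrow> complex) topology" where
  "dual_topology = topology_generated_by
     {{\<xi>\<in>dual_group. \<xi> ` K \<subseteq> U} | K U. compact K \<and> open U}"

definition borel_of :: "'a topology \<Rightarrow> 'a measure" where
  "borel_of X = sigma (topspace X) {U. openin X U}"

definition Lfun :: "'g::{ab_group_add, metric_space} measure \<Rightarrow> ('g \<times> 'y \<Rightarrow> 'g \<times> 'y \<Rightarrow> complex)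
    \<Rightarrow> ('g \<Rightarrow> complex) \<Rightarrow> 'y \<Rightarrow> 'y \<Rightarrow> complex" where
  "Lfun nu K \<xi> y v = (\<integral>u. K (0, y) (u, v) * cnj (\<xi> u) \<partial>nu)"

definition cpos :: "complex \<Rightarrow> bool" where
  "cpos z \<longleftrightarrow> Im z = 0 \<and> Re z > 0"

definition Omega_set :: "'g::{ab_group_add, metric_space} measure \<Rightarrow> 'y measure
    \<Rightarrow> ('g \<times> 'y \<Rightarrow> 'g \<times> 'y \<Rightarrow> complex) \<Rightarrow> ('g \<Rightarrow> complex) set" where
  "Omega_set nu lam K = {\<xi>\<in>dual_group. \<exists>y\<in>space lam. cpos (Lfun nu K \<xi> y y)}"

end

(*
  For y in Y write k_y(u) = K_{0,y}(u, y); then L_{xi,y}(y) is the Fourier transform of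
  k_y in L^1(G) at xi.  The reproducing property makes K Hermitian, so translation invariance
  gives k_y(-u) = conj (k_y(u)), and since Haar measure on an abelian group is inversion
  invariant, every L_{xi,y}(y) is real.  Fourier transforms of L^1 functions are continuous
  for the compact-open topology, hence Borel, and |f^(xi) - g^(xi)| <= |f - g|_1.
  Separability of L^2(G) implies separability of L^1(G), so a countable Y0 gives an
  L^1-dense part of the family (k_y): if k_y^(xi) > 0, then k_y'^(xi) > 0 for some y' in Y0
  close to y.  The Borel sets {xi. k_y^(xi) > 0}, y in Y0, thus cover Omega, and
  disjointifying them along an enumeration of Y0 gives the partition.
*)
theory Submission
  imports Defs
begin

section \<open>Approximation in \<open>L\<^sup>1\<close>\<close>

definition L1_dist :: "'a measure \<Rightarrow> ('a \<Rightarrow> complex) \<Rightarrow> ('a \<Rightarrow> complex) \<Rightarrow> real" where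
  "L1_dist M f g = (\<integral>x. norm (f x - g x) \<partial>M)"

lemma L1_dist_commute: "L1_dist M f g = L1_dist M g f"
  by (simp add: L1_dist_def norm_minus_commute)

lemma L1_dist_triangle:
  assumes "integrable M f" "integrable M g" "integrable M h"
  shows "L1_dist M f h \<le> L1_dist M f g + L1_dist M g h"
proof -
  have "L1_dist M f h \<le> (\<integral>x. norm (f x - g x) + norm (g x - h x) \<partial>M)"
    unfolding L1_dist_def using assms
    by (intro integral_mono') (auto intro: norm_diff_triangle_le)
  also have "\<dots> = L1_dist M f g + L1_dist M g h"
    unfolding L1_dist_def using assms by (simp add: Bochner_Integration.integral_add)
  finally show ?thesis .
qed

lemma integrable_bounded_support:
  fixes h :: "'a \<Rightarrow> 'b::{banach, second_countable_topology}"
  assumes "C \<in> sets M" "emeasure M C < \<infinity>" "h \<in> borel_measurable M"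
    and "\<And>x. norm (h x) \<le> c * indicator C x"
  shows "integrable M h"
proof (rule Bochner_Integration.integrable_bound)
  show "integrable M (\<lambda>x. c * indicator C x :: real)" using assms(1,2) by simp
  show "AE x in M. norm (h x) \<le> norm (c * indicator C x :: real)"
    using assms(4) by (intro AE_I2) (metis abs_ge_self order_trans real_norm_def)
qed fact

lemma square_integrable_bounded_support:
  assumes "C \<in> sets M" "emeasure M C < \<infinity>" "h \<in> borel_measurable M"
    and "\<And>x. norm (h x) \<le> c * indicator C x"
  shows "square_integrable M h"
  unfolding square_integrable_def
proof
  show "integrable M (\<lambda>x. (norm (h x))\<^sup>2)"
  proof (rule integrable_bounded_support[OF assms(1,2)])
    show "norm ((norm (h x))\<^sup>2) \<le> c\<^sup>2 * indicator C x" for x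
    proof (cases "x \<in> C")
      case True
      then have "norm (h x) \<le> c" using assms(4)[of x] by simp
      then show ?thesis using True power_mono[OF _ norm_ge_zero] by simp
    next
      case False
      then show ?thesis using assms(4)[of x] by simp
    qed
  qed (use assms(3) in measurable)
qed fact

lemma integrable_indicator_mult_square_integrable:
  assumes "C \<in> sets M" "emeasure M C < \<infinity>" and d: "square_integrable M d"
  shows "integrable M (\<lambda>x. indicator C x * d x)"
proof (rule Bochner_Integration.integrable_bound)
  show "integrable M (\<lambda>x. (norm (d x))\<^sup>2 + indicator C x :: real)"
    using assms unfolding square_integrable_def by simp
  have [measurable]: "d \<in> borel_measurable M" using d by (simp add: square_integrable_def)
  show "(\<lambda>x. indicator C x * d x) \<in> borel_measurable M"
    using assms(1) by measurable
  have "norm (d x) \<le> (norm (d x))\<^sup>2 + 1" for x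
  proof -
    have "2 * norm (d x) \<le> (norm (d x))\<^sup>2 + 1" using sum_squares_bound[of "norm (d x)" 1] by simp
    then show ?thesis using norm_ge_zero[of "d x"] by linarith
  qed
  then show "AE x in M. norm (indicator C x * d x) \<le> norm ((norm (d x))\<^sup>2 + indicator C x :: real)"
    by (intro AE_I2) (simp add: indicator_def)
qed

lemma integrable_square_norm_diff:
  assumes "square_integrable M f" "square_integrable M g"
  shows "integrable M (\<lambda>x. (norm (f x - g x))\<^sup>2)"
proof (rule Bochner_Integration.integrable_bound)
  show "integrable M (\<lambda>x. 2 * (norm (f x))\<^sup>2 + 2 * (norm (g x))\<^sup>2)"
    using assms unfolding square_integrable_def by simp
  have [measurable]: "f \<in> borel_measurable M" "g \<in> borel_measurable M"
    using assms by (simp_all add: square_integrable_def)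
  show "(\<lambda>x. (norm (f x - g x))\<^sup>2) \<in> borel_measurable M"
    by measurable
  have "(norm (f x - g x))\<^sup>2 \<le> 2 * (norm (f x))\<^sup>2 + 2 * (norm (g x))\<^sup>2" for x
  proof -
    have "(norm (f x - g x))\<^sup>2 \<le> (norm (f x) + norm (g x))\<^sup>2"
      by (intro power_mono norm_triangle_ineq4) simp
    also have "\<dots> \<le> 2 * (norm (f x))\<^sup>2 + 2 * (norm (g x))\<^sup>2"
      using sum_squares_bound[of "norm (f x)" "norm (g x)"] by (simp add: power2_sum)
    finally show ?thesis .
  qed
  then show "AE x in M. norm ((norm (f x - g x))\<^sup>2) \<le> norm (2 * (norm (f x))\<^sup>2 + 2 * (norm (g x))\<^sup>2)"
    by (intro AE_I2) simp
qed

lemma L1_approx_truncation: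
  fixes f :: "'a \<Rightarrow> complex"
  assumes B: "range B \<subseteq> sets M" "(\<Union>n. B n) = space M" "incseq B"
    and f: "integrable M f" and e: "e > 0"
  obtains n :: nat and h where "h \<in> borel_measurable M" "\<And>x. norm (h x) \<le> real n * indicator (B n) x"
    "L1_dist M f h < e"
proof -
  have [measurable]: "B n \<in> sets M" for n using B(1) by auto
  have [measurable]: "f \<in> borel_measurable M" using f by simp
  define h where "h n x = indicator (B n) x * (if norm (f x) \<le> real n then f x else 0)" for n x
  have h_meas: "h n \<in> borel_measurable M" for n unfolding h_def by measurable
  have "(\<lambda>n. L1_dist M f (h n)) \<longlonglongrightarrow> (\<integral>x. 0 \<partial>M)"
    unfolding L1_dist_def
  proof (rule integral_dominated_convergence[where w = "\<lambda>x. norm (f x)"])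
    show "AE x in M. (\<lambda>n. norm (f x - h n x)) \<longlonglongrightarrow> 0"
    proof (rule AE_I2)
      fix x assume "x \<in> space M"
      then obtain m where m: "x \<in> B m" using B(2) by auto
      obtain N where N: "norm (f x) \<le> real N" using real_arch_simple by blast
      have "norm (f x - h n x) = 0" if "max m N \<le> n" for n
        using m N monoD[OF B(3), of m n] that by (auto simp: h_def)
      then have "\<forall>\<^sub>F n in sequentially. norm (f x - h n x) = 0"
        unfolding eventually_sequentially by blast
      then show "(\<lambda>n. norm (f x - h n x)) \<longlonglongrightarrow> 0" by (rule tendsto_eventually)
    qed
    show "AE x in M. norm (norm (f x - h n x)) \<le> norm (f x)" for n
      by (intro AE_I2) (simp add: h_def indicator_def)
  qed (use f h_meas in auto)
  then have "\<forall>\<^sub>F n in sequentially. L1_dist M f (h n) < e"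
    using e by (simp add: order_tendstoD(2))
  then obtain n where close: "L1_dist M f (h n) < e"
    by (auto simp: eventually_sequentially)
  have bound: "norm (h n x) \<le> real n * indicator (B n) x" for x
    by (simp add: h_def indicator_def)
  show thesis by (rule that[OF h_meas bound close])
qed

lemma L1_dist_indicator_le:
  assumes C: "C \<in> sets M" "emeasure M C < \<infinity>" and h_supp: "\<And>x. x \<notin> C \<Longrightarrow> h x = 0"
    and sq: "integrable M (\<lambda>x. (norm (h x - d x))\<^sup>2)" and t: "t > 0"
  shows "L1_dist M h (\<lambda>x. indicator C x * d x)
    \<le> t / 2 * (\<integral>x. (norm (h x - d x))\<^sup>2 \<partial>M) + measure M C / (2 * t)"
proof -
  have "norm (h x - indicator C x * d x) \<le> t / 2 * (norm (h x - d x))\<^sup>2 + indicator C x / (2 * t)" for x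
  proof (cases "x \<in> C")
    case True
    have "0 \<le> (t * norm (h x - d x) - 1)\<^sup>2" by simp
    then show ?thesis using True t by (simp add: field_simps power2_eq_square)
  next
    case False
    then show ?thesis using t h_supp by simp
  qed
  then have "L1_dist M h (\<lambda>x. indicator C x * d x)
      \<le> (\<integral>x. t / 2 * (norm (h x - d x))\<^sup>2 + indicator C x / (2 * t) \<partial>M)"
    unfolding L1_dist_def using sq C t by (intro integral_mono') auto
  also have "\<dots> = t / 2 * (\<integral>x. (norm (h x - d x))\<^sup>2 \<partial>M) + measure M C / (2 * t)"
    using sq C by simp
  finally show ?thesis .
qed

lemma L1_approx_by_L2_dense:
  assumes C: "C \<in> sets M" "emeasure M C < \<infinity>"
    and h: "h \<in> borel_measurable M" "\<And>x. norm (h x) \<le> c * indicator C x"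
    and D: "\<And>d. d \<in> D \<Longrightarrow> square_integrable M d"
    and D_dense: "\<And>f e. square_integrable M f \<Longrightarrow> e > 0 \<Longrightarrow> \<exists>d\<in>D. (\<integral>x. (norm (f x - d x))\<^sup>2 \<partial>M) < e"
    and e: "e > 0"
  obtains d where "d \<in> D" "L1_dist M h (\<lambda>x. indicator C x * d x) < e"
proof -
  define \<mu> where "\<mu> = measure M C"
  define t where "t = 2 * (\<mu> + 1) / e"
  have \<mu>: "\<mu> \<ge> 0" by (simp add: \<mu>_def)
  then have t: "t > 0" using e by (simp add: t_def)
  then have "e / (2 * t) > 0" using e by simp
  then obtain d where d: "d \<in> D" and hd: "(\<integral>x. (norm (h x - d x))\<^sup>2 \<partial>M) < e / (2 * t)"
    using D_dense[OF square_integrable_bounded_support[OF C h]] by blast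
  have h_supp: "h x = 0" if "x \<notin> C" for x
    using h(2)[of x] that by simp
  have "L1_dist M h (\<lambda>x. indicator C x * d x) \<le> t / 2 * (\<integral>x. (norm (h x - d x))\<^sup>2 \<partial>M) + \<mu> / (2 * t)"
    unfolding \<mu>_def using square_integrable_bounded_support[OF C h] D[OF d]
    by (intro L1_dist_indicator_le[OF C h_supp integrable_square_norm_diff t])
  also have "\<dots> < t / 2 * (e / (2 * t)) + e / 2"
  proof (rule add_less_le_mono)
    show "t / 2 * (\<integral>x. (norm (h x - d x))\<^sup>2 \<partial>M) < t / 2 * (e / (2 * t))"
      using t by (intro mult_strict_left_mono[OF hd]) simp
    show "\<mu> / (2 * t) \<le> e / 2"
      using \<mu> e by (simp add: t_def field_simps)
  qed
  also have "\<dots> \<le> e" using t e by (simp add: field_simps)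
  finally show thesis using d that by blast
qed

lemma L2_separable_imp_L1_separable:
  assumes "sigma_finite_measure M" and "L2_separable M"
  obtains A :: "('a \<Rightarrow> complex) set"
  where "countable A" "\<And>a. a \<in> A \<Longrightarrow> integrable M a"
    "\<And>f e. integrable M f \<Longrightarrow> e > 0 \<Longrightarrow> \<exists>a\<in>A. L1_dist M f a < e"
proof -
  obtain D where D: "countable D" "\<And>d. d \<in> D \<Longrightarrow> square_integrable M d"
    and D_dense: "\<And>f e. square_integrable M f \<Longrightarrow> e > 0 \<Longrightarrow> \<exists>d\<in>D. (\<integral>x. (norm (f x - d x))\<^sup>2 \<partial>M) < e"
    using assms(2) unfolding L2_separable_def by metis
  obtain B :: "nat \<Rightarrow> 'a set" where B: "range B \<subseteq> sets M" "(\<Union>n. B n) = space M"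
    "\<And>n. emeasure M (B n) \<noteq> \<infinity>" "incseq B"
    using sigma_finite_measure.sigma_finite_incseq[OF assms(1)] by metis
  have B_sets: "B n \<in> sets M" and B_fin: "emeasure M (B n) < \<infinity>" for n
    using B(1,3) by (auto simp: less_top)
  define A where "A = (\<lambda>(n, d) x. indicator (B n) x * d x) ` (UNIV \<times> D)"
  show thesis
  proof (rule that)
    show "countable A" unfolding A_def using D(1) by simp
    show "integrable M a" if "a \<in> A" for a
      using that integrable_indicator_mult_square_integrable[OF B_sets B_fin D(2)]
      unfolding A_def by auto
  next
    fix f :: "'a \<Rightarrow> complex" and e :: real
    assume f: "integrable M f" and e: "e > 0"
    have e2: "e / 2 > 0" using e by simp
    obtain n h where h: "h \<in> borel_measurable M" "\<And>x. norm (h x) \<le> real n * indicator (B n) x"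
      and fh: "L1_dist M f h < e / 2"
      using L1_approx_truncation[OF B(1,2,4) f e2] by blast
    obtain d where d: "d \<in> D" and hd: "L1_dist M h (\<lambda>x. indicator (B n) x * d x) < e / 2"
      using L1_approx_by_L2_dense[OF B_sets B_fin h D(2) D_dense e2] by blast
    have "L1_dist M f (\<lambda>x. indicator (B n) x * d x) < e"
      using L1_dist_triangle[OF f integrable_bounded_support[OF B_sets[of n] B_fin[of n] h]
          integrable_indicator_mult_square_integrable[OF B_sets[of n] B_fin[of n] D(2)[OF d]]] fh hd
      by linarith
    moreover have "(\<lambda>x. indicator (B n) x * d x) \<in> A"
      unfolding A_def using d by (intro image_eqI[of _ _ "(n, d)"]) auto
    ultimately show "\<exists>a\<in>A. L1_dist M f a < e" by blast
  qed
qed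

lemma countable_dense_subfamily:
  fixes \<rho> :: "'b \<Rightarrow> 'b \<Rightarrow> real" and g :: "'y \<Rightarrow> 'b"
  assumes A: "countable A"
    and dense: "\<And>y e. y \<in> Y \<Longrightarrow> e > 0 \<Longrightarrow> \<exists>a\<in>A. \<rho> (g y) a < e"
    and triangle: "\<And>y y' a. y \<in> Y \<Longrightarrow> y' \<in> Y \<Longrightarrow> a \<in> A \<Longrightarrow> \<rho> (g y) (g y') \<le> \<rho> (g y) a + \<rho> (g y') a"
  obtains Y0 where "Y0 \<subseteq> Y" "countable Y0"
    "\<And>y e. y \<in> Y \<Longrightarrow> e > 0 \<Longrightarrow> \<exists>y'\<in>Y0. \<rho> (g y) (g y') < e"
proof -
  define S where "S a m = {y \<in> Y. \<rho> (g y) a < 1 / Suc m}" for a m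
  define pick where "pick a m = (SOME y. y \<in> S a m)" for a m
  define Y0 where "Y0 = (\<lambda>(a, m). pick a m) ` {(a, m). a \<in> A \<and> S a m \<noteq> {}}"
  have pick: "pick a m \<in> S a m" if "S a m \<noteq> {}" for a m
    using that unfolding pick_def by (simp add: some_in_eq)
  show thesis
  proof (rule that)
    show "Y0 \<subseteq> Y" unfolding Y0_def using pick by (auto simp: S_def)
    have "{(a, m). a \<in> A \<and> S a m \<noteq> {}} \<subseteq> A \<times> UNIV" by auto
    then show "countable Y0"
      unfolding Y0_def using A by (intro countable_image countable_subset[OF _ countable_SIGMA]) auto
  next
    fix y and e :: real assume y: "y \<in> Y" and e: "e > 0"
    have "e / 2 > 0" using e by simp
    then obtain m where m: "1 / Suc m < e / 2" using nat_approx_posE by blast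
    have "1 / Suc m > 0" by simp
    then obtain a where a: "a \<in> A" "\<rho> (g y) a < 1 / Suc m" using dense[OF y] by blast
    then have "S a m \<noteq> {}" using y by (auto simp: S_def)
    then have y': "pick a m \<in> Y" "\<rho> (g (pick a m)) a < 1 / Suc m"
      using pick[of a m] by (simp_all add: S_def)
    have "pick a m \<in> Y0"
      unfolding Y0_def using a(1) \<open>S a m \<noteq> {}\<close> by (intro image_eqI[of _ _ "(a, m)"]) auto
    have "\<rho> (g y) (g (pick a m)) < e"
      using triangle[OF y y'(1) a(1)] a(2) y'(2) m by linarith
    then show "\<exists>y'\<in>Y0. \<rho> (g y) (g y') < e" using \<open>pick a m \<in> Y0\<close> by blast
  qed
qed

lemma countable_disjointification:
  assumes I: "countable I" and P: "\<And>i. i \<in> I \<Longrightarrow> P i \<in> sets M"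
  obtains Q where "\<And>i. i \<in> I \<Longrightarrow> Q i \<in> sets M" "\<And>i. i \<in> I \<Longrightarrow> Q i \<subseteq> P i"
    "disjoint_family_on Q I" "(\<Union>i\<in>I. Q i) = (\<Union>i\<in>I. P i)"
proof -
  define idx where "idx = to_nat_on I"
  define Q where "Q i = P i - (\<Union>j\<in>{j \<in> I. idx j < idx i}. P j)" for i
  show thesis
  proof (rule that)
    show "Q i \<in> sets M" if "i \<in> I" for i
    proof -
      have "(\<Union>j\<in>{j \<in> I. idx j < idx i}. P j) \<in> sets M"
        using P I by (intro sets.countable_UN'') (auto intro: countable_subset)
      then show ?thesis unfolding Q_def using P[OF that] by simp
    qed
    show "Q i \<subseteq> P i" for i unfolding Q_def by blast
    show "disjoint_family_on Q I"
      unfolding disjoint_family_on_def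
    proof (intro ballI impI)
      fix i j assume ij: "i \<in> I" "j \<in> I" "i \<noteq> j"
      then have "idx i \<noteq> idx j" using I by (simp add: idx_def)
      then have "idx i < idx j \<or> idx j < idx i" by linarith
      then show "Q i \<inter> Q j = {}" unfolding Q_def using ij by blast
    qed
    show "(\<Union>i\<in>I. Q i) = (\<Union>i\<in>I. P i)"
    proof (intro equalityI subsetI)
      fix x assume "x \<in> (\<Union>i\<in>I. P i)"
      then obtain i where "i \<in> I \<and> x \<in> P i" by blast
      from ex_has_least_nat[of "\<lambda>i. i \<in> I \<and> x \<in> P i", OF this, of idx]
      obtain i0 where "i0 \<in> I" "x \<in> P i0" "\<And>j. j \<in> I \<Longrightarrow> x \<in> P j \<Longrightarrow> idx i0 \<le> idx j"
        by blast
      then have "x \<in> Q i0" unfolding Q_def by force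
      then show "x \<in> (\<Union>i\<in>I. Q i)" using \<open>i0 \<in> I\<close> by blast
    qed (auto simp: Q_def)
  qed
qed

lemma sigma_compact_imp_countable_dense:
  fixes C :: "nat \<Rightarrow> 'a::metric_space set"
  assumes C: "\<And>n. compact (C n)" "(\<Union>n. C n) = UNIV"
  obtains D :: "'a set" where "countable D" "\<And>x e. e > 0 \<Longrightarrow> \<exists>d\<in>D. dist x d < e"
proof -
  have "\<exists>T. finite T \<and> C n \<subseteq> (\<Union>c\<in>T. ball c (1 / Suc m))" for n m
  proof -
    have "C n \<subseteq> (\<Union>c\<in>C n. ball c (1 / Suc m))" by auto
    from compactE_image[OF C(1) _ this] show ?thesis by (metis open_ball)
  qed
  then obtain T where T: "\<And>n m. finite (T n m)" "\<And>n m. C n \<subseteq> (\<Union>c\<in>T n m. ball c (1 / Suc m))"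
    by metis
  show thesis
  proof (rule that[of "\<Union>n m. T n m"])
    show "countable (\<Union>n m. T n m)" using T(1) by (simp add: countable_finite)
  next
    fix x :: 'a and e :: real assume "e > 0"
    obtain n where n: "x \<in> C n" using C(2) by auto
    obtain m where m: "1 / Suc m < e" using nat_approx_posE[OF \<open>e > 0\<close>] by blast
    obtain c where "c \<in> T n m" "dist c x < 1 / Suc m" using T(2)[of n m] n by auto
    then have "c \<in> (\<Union>n m. T n m)" "dist x c < e" using m by (fastforce, simp add: dist_commute)
    then show "\<exists>d\<in>(\<Union>n m. T n m). dist x d < e" by blast
  qed
qed

lemma open_in_sets_pair_borel:
  fixes D1 :: "'a::metric_space set" and D2 :: "'b::metric_space set" and S :: "('a \<times> 'b) set"
  assumes D1: "countable D1" "\<And>x e. e > 0 \<Longrightarrow> \<exists>d\<in>D1. dist x d < e"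
    and D2: "countable D2" "\<And>y e. e > 0 \<Longrightarrow> \<exists>d\<in>D2. dist y d < e"
    and "open S"
  shows "S \<in> sets (borel \<Otimes>\<^sub>M borel)"
proof -
  define I where "I = {(a, b, r::real). a \<in> D1 \<and> b \<in> D2 \<and> r \<in> \<rat> \<and> ball a r \<times> ball b r \<subseteq> S}"
  have "I \<subseteq> D1 \<times> D2 \<times> (\<rat> :: real set)" unfolding I_def by auto
  then have "countable I"
    using countable_subset D1(1) D2(1) countable_rat by (metis countable_SIGMA)
  have "S = (\<Union>(a, b, r)\<in>I. ball a r \<times> ball b r)"
  proof (intro equalityI subsetI)
    fix p assume "p \<in> S"
    obtain x y where p: "p = (x, y)" by force
    obtain A B where "open A" "open B" "p \<in> A \<times> B" "A \<times> B \<subseteq> S"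
      by (rule open_prod_elim[OF \<open>open S\<close> \<open>p \<in> S\<close>])
    then have AB: "open A" "open B" "x \<in> A" "y \<in> B" "A \<times> B \<subseteq> S" using p by auto
    obtain e1 e2 where e: "e1 > 0" "ball x e1 \<subseteq> A" "e2 > 0" "ball y e2 \<subseteq> B"
      using AB open_contains_ball by meson
    obtain r where r: "r \<in> \<rat>" "0 < r" "r < min e1 e2 / 2"
      using e Rats_dense_in_real[of 0 "min e1 e2 / 2"] by auto
    obtain a b where ab: "a \<in> D1" "dist x a < r" "b \<in> D2" "dist y b < r"
      using D1(2) D2(2) r(2) by meson
    have "ball a r \<subseteq> ball x e1" "ball b r \<subseteq> ball y e2"
      using ab r by (auto simp: subset_eq; metric)+
    then have "(a, b, r) \<in> I" using ab r AB e unfolding I_def by blast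
    moreover have "p \<in> ball a r \<times> ball b r" using p ab by (simp add: dist_commute)
    ultimately show "p \<in> (\<Union>(a, b, r)\<in>I. ball a r \<times> ball b r)" by blast
  qed (auto simp: I_def)
  also have "\<dots> \<in> sets (borel \<Otimes>\<^sub>M borel)"
    using \<open>countable I\<close> by (intro sets.countable_UN'') auto
  finally show ?thesis .
qed

lemma dual_group_continuous: "\<xi> \<in> dual_group \<Longrightarrow> continuous_on UNIV \<xi>"
  by (simp add: dual_group_def)

lemma norm_dual_group: "\<xi> \<in> dual_group \<Longrightarrow> norm (\<xi> a) = 1"
  by (simp add: dual_group_def)

lemma dual_group_add: "\<xi> \<in> dual_group \<Longrightarrow> \<xi> (a + b) = \<xi> a * \<xi> b"
  by (simp add: dual_group_def)

lemma norm_dual_group_diff_le: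
  assumes "\<xi> \<in> dual_group" "\<eta> \<in> dual_group"
  shows "norm (\<xi> a - \<eta> a) \<le> 2"
  using norm_triangle_ineq4[of "\<xi> a" "\<eta> a"] norm_dual_group[OF assms(1)] norm_dual_group[OF assms(2)]
  by simp

lemma dual_group_uminus:
  assumes \<xi>: "\<xi> \<in> dual_group"
  shows "\<xi> (- a) = cnj (\<xi> a)"
proof -
  have "\<xi> 0 * \<xi> 0 = \<xi> 0 * 1" "\<xi> 0 \<noteq> 0"
    using dual_group_add[OF \<xi>, of 0 0] norm_dual_group[OF \<xi>, of 0] by auto
  then have "\<xi> (- a) * \<xi> a = 1"
    using dual_group_add[OF \<xi>, of "- a" a] by (metis add.left_inverse mult_left_cancel)
  moreover have "cnj (\<xi> a) * \<xi> a = 1"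
    using norm_dual_group[OF \<xi>, of a] by (simp add: complex_norm_square[symmetric] mult.commute)
  moreover have "\<xi> a \<noteq> 0"
    using norm_dual_group[OF \<xi>, of a] by auto
  ultimately show ?thesis by (metis mult_cancel_right)
qed

lemma topspace_dual_topology: "topspace dual_topology = dual_group"
proof -
  have "{\<xi> \<in> dual_group. \<xi> ` {} \<subseteq> UNIV} \<in> {{\<xi> \<in> dual_group. \<xi> ` K \<subseteq> U} | K U. compact K \<and> open U}"
    by blast
  then show ?thesis
    unfolding dual_topology_def topology_generated_by_topspace by auto
qed

lemma openin_dual_topology_subbasic:
  "compact K \<Longrightarrow> open U \<Longrightarrow> openin dual_topology {\<xi> \<in> dual_group. \<xi> ` K \<subseteq> U}"
  unfolding dual_topology_def by (rule topology_generated_by_Basis) blast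

lemma space_borel_of [simp]: "space (borel_of X) = topspace X"
  unfolding borel_of_def by (rule space_measure_of) (auto dest: openin_subset)

lemma openin_imp_sets_borel_of: "openin X U \<Longrightarrow> U \<in> sets (borel_of X)"
  unfolding borel_of_def by (subst sets_measure_of) (auto dest: openin_subset)

lemma borel_measurable_borel_of:
  fixes f :: "'a \<Rightarrow> 'b::topological_space"
  assumes "continuous_map X euclidean f"
  shows "f \<in> borel_measurable (borel_of X)"
proof (rule borel_measurableI)
  fix S :: "'b set" assume "open S"
  then have "openin X {x \<in> topspace X. f x \<in> S}"
    using assms by (simp add: continuous_map)
  then show "f -` S \<inter> space (borel_of X) \<in> sets (borel_of X)"
    by (simp add: openin_imp_sets_borel_of Int_def conj_commute)
qed

lemma dual_topology_uniform_nhd: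
  fixes C :: "'g::{ab_group_add, metric_space} set"
  assumes C: "compact C" and \<xi>: "\<xi> \<in> dual_group" and e: "e > 0"
  obtains W where "openin dual_topology W" "\<xi> \<in> W" "\<And>\<eta> c. \<eta> \<in> W \<Longrightarrow> c \<in> C \<Longrightarrow> norm (\<eta> c - \<xi> c) < e"
proof -
  have "uniformly_continuous_on C \<xi>"
    using compact_uniformly_continuous[OF continuous_on_subset[OF dual_group_continuous[OF \<xi>]] C]
    by simp
  then obtain d where d: "d > 0" "\<And>x x'. x \<in> C \<Longrightarrow> x' \<in> C \<Longrightarrow> dist x' x < d \<Longrightarrow> dist (\<xi> x') (\<xi> x) < e / 2"
    unfolding uniformly_continuous_on_def using e by (metis half_gt_zero)
  have "C \<subseteq> (\<Union>c\<in>C. ball c (d / 2))" using d(1) by auto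
  then obtain T where T: "T \<subseteq> C" "finite T" "C \<subseteq> (\<Union>c\<in>T. ball c (d / 2))"
    using compactE_image[OF C] by (metis open_ball)
  define W where "W = (\<Inter>c\<in>T. {\<eta> \<in> dual_group. \<eta> ` (C \<inter> cball c (d / 2)) \<subseteq> ball (\<xi> c) (e / 2)})
    \<inter> topspace dual_topology"
  show thesis
  proof (rule that)
    show "openin dual_topology W"
      unfolding W_def using T(2)
      by (intro openin_INT openin_dual_topology_subbasic compact_Int_closed C closed_cball open_ball)
    have "\<xi> ` (C \<inter> cball c (d / 2)) \<subseteq> ball (\<xi> c) (e / 2)" if "c \<in> T" for c
      using d T(1) that by (fastforce simp: dist_commute)
    then show "\<xi> \<in> W" unfolding W_def using \<xi> by (auto simp: topspace_dual_topology)
  next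
    fix \<eta> c assume \<eta>: "\<eta> \<in> W" and c: "c \<in> C"
    obtain t where t: "t \<in> T" "c \<in> ball t (d / 2)" using T(3) c by auto
    then have "c \<in> C \<inter> cball t (d / 2)" using c by simp
    then have "\<eta> c \<in> ball (\<xi> t) (e / 2)" using \<eta> t(1) unfolding W_def by blast
    moreover have "dist (\<xi> c) (\<xi> t) < e / 2"
    proof (rule d(2))
      show "t \<in> C" "dist c t < d" using t T(1) d(1) by (auto simp: dist_commute)
    qed fact
    ultimately have "dist (\<eta> c) (\<xi> c) < e"
      using dist_triangle_half_l[of "\<eta> c" "\<xi> t" e "\<xi> c"] by (simp add: dist_commute)
    then show "norm (\<eta> c - \<xi> c) < e" by (simp add: dist_norm)
  qed
qed

section \<open>Haar measure\<close>

locale haar_lca =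
  fixes nu :: "'g::{ab_group_add, metric_space} measure"
  assumes lca: "metrizable_sigma_compact_lca TYPE('g)"
    and haar: "haar_measure nu"
begin

lemma sets_nu [measurable_cong]: "sets nu = sets borel"
  using haar by (simp add: haar_measure_def)

lemma space_nu [simp]: "space nu = UNIV"
  using sets_eq_imp_space_eq[OF sets_nu] by simp

lemma emeasure_translate: "A \<in> sets borel \<Longrightarrow> emeasure nu ((\<lambda>a. x + a) ` A) = emeasure nu A"
  using haar by (simp add: haar_measure_def)

lemma emeasure_compact_finite: "compact C \<Longrightarrow> emeasure nu C < \<infinity>"
  using haar by (simp add: haar_measure_def)

lemma emeasure_open_pos: "open U \<Longrightarrow> U \<noteq> {} \<Longrightarrow> 0 < emeasure nu U"
  using haar by (simp add: haar_measure_def)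

lemma compact_exhaustion:
  obtains C :: "nat \<Rightarrow> 'g set" where "\<And>n. compact (C n)" "(\<Union>n. C n) = UNIV"
  using lca unfolding metrizable_sigma_compact_lca_def by blast

lemma countable_dense:
  obtains D :: "'g set" where "countable D" "\<And>x e. e > 0 \<Longrightarrow> \<exists>d\<in>D. dist x d < e"
proof -
  obtain C :: "nat \<Rightarrow> 'g set" where "\<And>n. compact (C n)" "(\<Union>n. C n) = UNIV"
    using compact_exhaustion by blast
  from sigma_compact_imp_countable_dense[OF this] show thesis using that by blast
qed

lemma sigma_finite_nu: "sigma_finite_measure nu"
proof
  obtain C :: "nat \<Rightarrow> 'g set" where C: "\<And>n. compact (C n)" "(\<Union>n. C n) = UNIV"
    using compact_exhaustion by blast
  have "range C \<subseteq> sets nu"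
    using C(1) by (auto simp: sets_nu compact_imp_closed)
  moreover have "emeasure nu (C n) \<noteq> \<infinity>" for n
    using emeasure_compact_finite[OF C(1)] by (simp add: less_top)
  ultimately show "\<exists>A. countable A \<and> A \<subseteq> sets nu \<and> \<Union> A = space nu \<and> (\<forall>a\<in>A. emeasure nu a \<noteq> \<infinity>)"
    using C(2) by (intro exI[of _ "range C"]) simp
qed

lemma measurable_uminus_nu: "uminus \<in> measurable nu nu"
proof -
  have "continuous_on UNIV (uminus :: 'g \<Rightarrow> 'g)"
    using lca by (simp add: metrizable_sigma_compact_lca_def)
  then show ?thesis
    using borel_measurable_continuous_onI measurable_cong_sets[OF sets_nu sets_nu] by auto
qed

lemma measurable_add_nu: "(\<lambda>p. fst p + snd p) \<in> measurable (nu \<Otimes>\<^sub>M nu) nu"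
proof -
  obtain D :: "'g set" where D: "countable D" "\<And>x e. e > 0 \<Longrightarrow> \<exists>d\<in>D. dist x d < e"
    using countable_dense by blast
  have cont: "continuous_on UNIV (\<lambda>p::'g \<times> 'g. fst p + snd p)"
    using lca by (simp add: metrizable_sigma_compact_lca_def)
  have "(\<lambda>p. fst p + snd p) \<in> measurable (borel \<Otimes>\<^sub>M borel) (borel :: 'g measure)"
  proof (rule borel_measurableI)
    fix S :: "'g set" assume "open S"
    then have "open ((\<lambda>p. fst p + snd p) -` S)"
      using cont by (simp add: continuous_on_open_vimage)
    then show "(\<lambda>p. fst p + snd p) -` S \<inter> space (borel \<Otimes>\<^sub>M borel) \<in> sets (borel \<Otimes>\<^sub>M borel)"
      using open_in_sets_pair_borel[OF D D] by (simp add: space_pair_measure)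
  qed
  then show ?thesis
    using measurable_cong_sets[OF sets_pair_measure_cong[OF sets_nu sets_nu] sets_nu] by simp
qed

lemma measurable_uminus [measurable (raw)]:
  "f \<in> measurable M nu \<Longrightarrow> (\<lambda>x. - f x) \<in> measurable M nu"
  by (drule measurable_compose[OF _ measurable_uminus_nu]) simp

lemma measurable_add [measurable (raw)]:
  "f \<in> measurable M nu \<Longrightarrow> g \<in> measurable M nu \<Longrightarrow> (\<lambda>x. f x + g x) \<in> measurable M nu"
  using measurable_compose[OF measurable_Pair measurable_add_nu] by simp

lemma measurable_diff [measurable (raw)]:
  "f \<in> measurable M nu \<Longrightarrow> g \<in> measurable M nu \<Longrightarrow> (\<lambda>x. f x - g x) \<in> measurable M nu"
  using measurable_add[of f M "\<lambda>x. - g x"] measurable_uminus[of g M] by simp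

lemma distr_translate: "distr nu nu (\<lambda>y. a + y) = nu"
proof (rule measure_eqI)
  fix A assume "A \<in> sets (distr nu nu (\<lambda>y. a + y))"
  then have A: "A \<in> sets borel" by (simp add: sets_nu)
  have "emeasure (distr nu nu (\<lambda>y. a + y)) A = emeasure nu ((\<lambda>y. a + y) -` A)"
    using A by (subst emeasure_distr) (auto simp: sets_nu)
  also have "(\<lambda>y. a + y) -` A = (\<lambda>b. - a + b) ` A"
    by (auto simp: image_iff algebra_simps intro: exI[of _ "a + _"])
  also have "emeasure nu \<dots> = emeasure nu A"
    by (rule emeasure_translate[OF A])
  finally show "emeasure (distr nu nu (\<lambda>y. a + y)) A = emeasure nu A" .
qed simp

lemma nn_integral_translate:
  "g \<in> borel_measurable nu \<Longrightarrow> (\<integral>\<^sup>+y. g (a + y) \<partial>nu) = integral\<^sup>N nu g"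
  by (subst (2) distr_translate[symmetric, of a]) (simp add: nn_integral_distr)

lemma exists_set_positive_finite:
  obtains U where "U \<in> sets nu" "0 < emeasure nu U" "emeasure nu U < \<infinity>"
proof -
  obtain U C where UC: "open U" "compact C" "(0::'g) \<in> U" "U \<subseteq> C"
    using lca unfolding metrizable_sigma_compact_lca_def by blast
  have "0 < emeasure nu U" using emeasure_open_pos UC by auto
  also have "\<dots> \<le> emeasure nu C" using UC by (intro emeasure_mono) (auto simp: compact_imp_closed)
  finally have "0 < emeasure nu C" .
  moreover have "C \<in> sets nu" using UC(2) by (simp add: sets_nu compact_imp_closed)
  ultimately show thesis using emeasure_compact_finite[OF UC(2)] by (intro that)
qed

text \<open>Both orders of integration of \<open>1\<^sub>A(x) 1\<^sub>U(x + y)\<close> are evaluated by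
  translation invariance; one gives \<open>\<mu>(A) \<mu>(U)\<close>, the other \<open>\<mu>(-A) \<mu>(U)\<close>.\<close>

lemma emeasure_uminus_vimage:
  assumes A [measurable]: "A \<in> sets nu"
  shows "emeasure nu (uminus -` A) = emeasure nu A"
proof -
  interpret pair_sigma_finite nu nu
    using sigma_finite_nu by (simp add: pair_sigma_finite_def)
  obtain U where U [measurable]: "U \<in> sets nu" and U_pos: "0 < emeasure nu U"
    and U_fin: "emeasure nu U < \<infinity>"
    using exists_set_positive_finite by blast
  have A' [measurable]: "uminus -` A \<in> sets nu"
    using measurable_sets[OF measurable_uminus_nu A] by simp
  have shift: "(\<integral>\<^sup>+x. indicator A x * indicator U (x + y) \<partial>nu)
      = (\<integral>\<^sup>+z. indicator A (z - y) * indicator U z \<partial>nu)" for y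
    by (subst nn_integral_translate[symmetric, where a = y]) (simp_all add: add.commute)
  have reflect: "(\<integral>\<^sup>+y. indicator A (z - y) \<partial>nu) = emeasure nu (uminus -` A)" for z
    using nn_integral_translate[of "indicator (uminus -` A)" "- z"] by (simp add: indicator_def)
  have "emeasure nu A * emeasure nu U = (\<integral>\<^sup>+x. indicator A x * emeasure nu U \<partial>nu)"
    by (simp add: nn_integral_multc)
  also have "\<dots> = (\<integral>\<^sup>+x. \<integral>\<^sup>+y. indicator A x * indicator U (x + y) \<partial>nu \<partial>nu)"
    using nn_integral_translate[of "indicator U"] by (simp add: nn_integral_cmult)
  also have "\<dots> = (\<integral>\<^sup>+y. \<integral>\<^sup>+x. indicator A x * indicator U (x + y) \<partial>nu \<partial>nu)"
    using Fubini[of "\<lambda>p. indicator A (fst p) * indicator U (fst p + snd p)"] by simp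
  also have "\<dots> = (\<integral>\<^sup>+y. \<integral>\<^sup>+z. indicator A (z - y) * indicator U z \<partial>nu \<partial>nu)"
    by (simp add: shift)
  also have "\<dots> = (\<integral>\<^sup>+z. \<integral>\<^sup>+y. indicator A (z - y) * indicator U z \<partial>nu \<partial>nu)"
    using Fubini[of "\<lambda>p. indicator A (snd p - fst p) * indicator U (snd p)"] by simp
  also have "\<dots> = (\<integral>\<^sup>+z. emeasure nu (uminus -` A) * indicator U z \<partial>nu)"
    by (simp add: nn_integral_multc reflect)
  also have "\<dots> = emeasure nu (uminus -` A) * emeasure nu U"
    by (simp add: nn_integral_cmult)
  finally have "emeasure nu U * emeasure nu A = emeasure nu U * emeasure nu (uminus -` A)"
    by (simp add: mult.commute)
  then show ?thesis
    using U_pos U_fin by (auto simp: ennreal_mult_cancel_left)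
qed

lemma distr_uminus: "distr nu nu uminus = nu"
  by (rule measure_eqI) (simp_all add: emeasure_distr emeasure_uminus_vimage)

lemma integral_reflect:
  fixes f :: "'g \<Rightarrow> 'b::{banach, second_countable_topology}"
  assumes "f \<in> borel_measurable nu"
  shows "(\<integral>x. f (- x) \<partial>nu) = integral\<^sup>L nu f"
  using integral_distr[OF measurable_uminus_nu assms] by (simp add: distr_uminus)

end

section \<open>Fourier transform on the dual group\<close>

definition fourier :: "'a measure \<Rightarrow> ('a \<Rightarrow> complex) \<Rightarrow> ('a \<Rightarrow> complex) \<Rightarrow> complex" where
  "fourier M f \<xi> = (\<integral>u. f u * cnj (\<xi> u) \<partial>M)"

lemma Lfun_eq_fourier: "Lfun nu K \<xi> y v = fourier nu (\<lambda>u. K (0, y) (u, v)) \<xi>"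
  by (simp add: Lfun_def fourier_def)

context haar_lca
begin

lemma borel_measurable_cnj_dual_group:
  assumes "\<xi> \<in> dual_group"
  shows "(\<lambda>u. cnj (\<xi> u)) \<in> borel_measurable nu"
proof -
  have "(\<lambda>u. cnj (\<xi> u)) \<in> borel_measurable borel"
    using dual_group_continuous[OF assms] by (intro borel_measurable_continuous_onI continuous_on_cnj)
  then show ?thesis by (simp add: measurable_cong_sets[OF sets_nu refl])
qed

lemma integrable_mult_cnj_dual_group:
  assumes f: "integrable nu f" and \<xi>: "\<xi> \<in> dual_group"
  shows "integrable nu (\<lambda>u. f u * cnj (\<xi> u))"
proof (rule Bochner_Integration.integrable_bound[OF f])
  show "(\<lambda>u. f u * cnj (\<xi> u)) \<in> borel_measurable nu"
    using f borel_measurable_cnj_dual_group[OF \<xi>] by (simp add: borel_measurable_times)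
  show "AE u in nu. norm (f u * cnj (\<xi> u)) \<le> norm (f u)"
    using norm_dual_group[OF \<xi>] by (simp add: norm_mult)
qed

lemma norm_fourier_diff_le:
  assumes f: "integrable nu f" and g: "integrable nu g" and \<xi>: "\<xi> \<in> dual_group"
  shows "norm (fourier nu f \<xi> - fourier nu g \<xi>) \<le> L1_dist nu f g"
proof -
  have "fourier nu f \<xi> - fourier nu g \<xi> = (\<integral>u. (f u - g u) * cnj (\<xi> u) \<partial>nu)"
    unfolding fourier_def left_diff_distrib
    using integrable_mult_cnj_dual_group[OF f \<xi>] integrable_mult_cnj_dual_group[OF g \<xi>]
    by (simp add: Bochner_Integration.integral_diff)
  also have "norm \<dots> \<le> (\<integral>u. norm ((f u - g u) * cnj (\<xi> u)) \<partial>nu)"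
    by (rule integral_norm_bound)
  also have "\<dots> = L1_dist nu f g"
    using norm_dual_group[OF \<xi>] by (simp add: L1_dist_def norm_mult)
  finally show ?thesis .
qed

lemma fourier_real_if_hermitian:
  assumes f: "f \<in> borel_measurable nu" and herm: "\<And>u. f (- u) = cnj (f u)"
    and \<xi>: "\<xi> \<in> dual_group"
  shows "Im (fourier nu f \<xi>) = 0"
proof -
  have "fourier nu f \<xi> = (\<integral>u. f (- u) * cnj (\<xi> (- u)) \<partial>nu)"
    unfolding fourier_def
    by (rule integral_reflect[symmetric]) (use f borel_measurable_cnj_dual_group[OF \<xi>] in measurable)
  also have "\<dots> = cnj (fourier nu f \<xi>)"
    unfolding fourier_def Bochner_Integration.integral_cnj[symmetric]
    by (simp add: herm dual_group_uminus[OF \<xi>])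
  finally show ?thesis by (metis cnj.simps(2) neg_equal_zero)
qed

lemma integrable_tail_small:
  fixes f :: "'g \<Rightarrow> 'b::{banach, second_countable_topology}"
  assumes f: "integrable nu f" and e: "e > 0"
  obtains C where "compact C" "(\<integral>u. norm (f u) * indicator (- C) u \<partial>nu) < e"
proof -
  obtain C :: "nat \<Rightarrow> 'g set" where C: "\<And>n. compact (C n)" "(\<Union>n. C n) = UNIV"
    using compact_exhaustion by blast
  define Cn where "Cn n = (\<Union>m\<le>n. C m)" for n
  have Cn: "compact (Cn n)" for n
    unfolding Cn_def using C(1) by (intro compact_UN) auto
  have Cn_sets [measurable]: "Cn n \<in> sets nu" for n
    using Cn by (simp add: sets_nu compact_imp_closed)
  have "(\<lambda>n. \<integral>u. norm (f u) * indicator (- Cn n) u \<partial>nu) \<longlonglongrightarrow> (\<integral>u. 0 \<partial>nu)"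
  proof (rule integral_dominated_convergence[where w = "\<lambda>u. norm (f u)"])
    show "AE u in nu. (\<lambda>n. norm (f u) * indicator (- Cn n) u) \<longlonglongrightarrow> 0"
    proof (rule AE_I2)
      fix u
      obtain m where "u \<in> C m" using C(2) by auto
      then have "u \<in> Cn n" if "m \<le> n" for n
        using that by (auto simp: Cn_def)
      then have "norm (f u) * indicator (- Cn n) u = 0" if "m \<le> n" for n
        using that by simp
      then show "(\<lambda>n. norm (f u) * indicator (- Cn n) u) \<longlonglongrightarrow> 0"
        by (intro tendsto_eventually) (auto simp: eventually_sequentially)
    qed
    show "AE u in nu. norm (norm (f u) * indicator (- Cn n) u) \<le> norm (f u)" for n
      by (intro AE_I2) (simp add: indicator_def)
  qed (use f integrable_norm[OF f] in auto)
  then have "\<forall>\<^sub>F n in sequentially. (\<integral>u. norm (f u) * indicator (- Cn n) u \<partial>nu) < e"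
    using e by (simp add: order_tendstoD(2))
  then obtain n where "(\<integral>u. norm (f u) * indicator (- Cn n) u \<partial>nu) < e"
    by (auto simp: eventually_sequentially)
  then show thesis by (rule that[OF Cn])
qed

lemma norm_fourier_diff_dual_le:
  assumes f: "integrable nu f" and \<xi>: "\<xi> \<in> dual_group" and \<eta>: "\<eta> \<in> dual_group"
    and C: "compact C" and close: "\<And>c. c \<in> C \<Longrightarrow> norm (\<eta> c - \<xi> c) \<le> \<delta>" and \<delta>: "\<delta> \<ge> 0"
  shows "norm (fourier nu f \<eta> - fourier nu f \<xi>)
    \<le> \<delta> * (\<integral>u. norm (f u) \<partial>nu) + 2 * (\<integral>u. norm (f u) * indicator (- C) u \<partial>nu)"
proof -
  have [measurable]: "- C \<in> sets nu" using C by (simp add: sets_nu compact_imp_closed)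
  have diff: "norm (\<eta> u - \<xi> u) \<le> \<delta> + 2 * indicator (- C) u" for u
    using close[of u] \<delta> norm_dual_group_diff_le[OF \<eta> \<xi>, of u] by (cases "u \<in> C") auto
  have bound: "norm (f u * cnj (\<eta> u) - f u * cnj (\<xi> u))
      \<le> \<delta> * norm (f u) + 2 * (norm (f u) * indicator (- C) u)" for u
  proof -
    have "norm (f u * cnj (\<eta> u) - f u * cnj (\<xi> u)) = norm (f u) * norm (\<eta> u - \<xi> u)"
      by (metis complex_cnj_diff complex_mod_cnj norm_mult right_diff_distrib)
    also have "\<dots> \<le> norm (f u) * (\<delta> + 2 * indicator (- C) u)"
      by (rule mult_left_mono[OF diff norm_ge_zero])
    finally show ?thesis by (simp add: algebra_simps)
  qed
  have tail: "integrable nu (\<lambda>u. norm (f u) * indicator (- C) u)"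
    using f by (intro integrable_real_mult_indicator integrable_norm) auto
  have "fourier nu f \<eta> - fourier nu f \<xi> = (\<integral>u. f u * cnj (\<eta> u) - f u * cnj (\<xi> u) \<partial>nu)"
    unfolding fourier_def
    using integrable_mult_cnj_dual_group[OF f \<xi>] integrable_mult_cnj_dual_group[OF f \<eta>]
    by (simp add: Bochner_Integration.integral_diff)
  also have "norm \<dots> \<le> (\<integral>u. \<delta> * norm (f u) + 2 * (norm (f u) * indicator (- C) u) \<partial>nu)"
    using f tail bound \<delta>
    by (intro order_trans[OF integral_norm_bound integral_mono']) auto
  also have "\<dots> = \<delta> * (\<integral>u. norm (f u) \<partial>nu) + 2 * (\<integral>u. norm (f u) * indicator (- C) u \<partial>nu)"
    using f tail by simp
  finally show ?thesis .
qed

lemma continuous_map_fourier: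
  assumes f: "integrable nu f"
  shows "continuous_map dual_topology euclidean (fourier nu f)"
  unfolding Met_TC.continuous_map_to_metric[of dual_topology, unfolded mtopology_is_euclidean mball_eq_ball]
proof (intro ballI allI impI)
  fix \<xi> :: "'g \<Rightarrow> complex" and r :: real assume "\<xi> \<in> topspace dual_topology" and r: "r > 0"
  then have \<xi>: "\<xi> \<in> dual_group" by (simp add: topspace_dual_topology)
  define L where "L = (\<integral>u. norm (f u) \<partial>nu)"
  define \<delta> where "\<delta> = r / (2 * (L + 1))"
  have L: "L \<ge> 0" by (simp add: L_def)
  then have \<delta>: "\<delta> > 0" and \<delta>L: "\<delta> * L < r / 2"
    using r by (simp_all add: \<delta>_def field_simps)
  obtain C where C: "compact C" and tail: "(\<integral>u. norm (f u) * indicator (- C) u \<partial>nu) < r / 4"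
    using integrable_tail_small[OF f, of "r / 4"] r by (metis divide_pos_pos zero_less_numeral)
  obtain W where W: "openin dual_topology W" "\<xi> \<in> W"
    and close: "\<And>\<eta> c. \<eta> \<in> W \<Longrightarrow> c \<in> C \<Longrightarrow> norm (\<eta> c - \<xi> c) < \<delta>"
    using dual_topology_uniform_nhd[OF C \<xi> \<delta>] by blast
  have "fourier nu f \<eta> \<in> ball (fourier nu f \<xi>) r" if \<eta>: "\<eta> \<in> W" for \<eta>
  proof -
    have "\<eta> \<in> dual_group"
      using openin_subset[OF W(1)] \<eta> by (auto simp: topspace_dual_topology)
    then have "norm (fourier nu f \<eta> - fourier nu f \<xi>)
        \<le> \<delta> * L + 2 * (\<integral>u. norm (f u) * indicator (- C) u \<partial>nu)"
      unfolding L_def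
      using close[OF \<eta>] \<delta> by (intro norm_fourier_diff_dual_le[OF f \<xi> _ C]) (auto intro: less_imp_le)
    also have "\<dots> < r" using \<delta>L tail by linarith
    finally show ?thesis by (simp add: dist_norm norm_minus_commute)
  qed
  then show "\<exists>U. openin dual_topology U \<and> \<xi> \<in> U \<and> (\<forall>\<eta>\<in>U. fourier nu f \<eta> \<in> ball (fourier nu f \<xi>) r)"
    using W by blast
qed

lemma sets_positive_fourier:
  assumes "integrable nu f"
  shows "{\<xi> \<in> dual_group. cpos (fourier nu f \<xi>)} \<in> sets (borel_of dual_topology)"
proof -
  have [measurable]: "fourier nu f \<in> borel_measurable (borel_of dual_topology)"
    by (rule borel_measurable_borel_of[OF continuous_map_fourier[OF assms]])
  have "{\<xi> \<in> space (borel_of dual_topology). Im (fourier nu f \<xi>) = 0 \<and> 0 < Re (fourier nu f \<xi>)}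
      \<in> sets (borel_of dual_topology)"
    by measurable
  then show ?thesis by (simp add: cpos_def topspace_dual_topology)
qed

lemma countable_cover_positive_fourier:
  fixes f :: "'y \<Rightarrow> 'g \<Rightarrow> complex"
  assumes sep: "L2_separable nu"
    and int: "\<And>y. y \<in> Y \<Longrightarrow> integrable nu (f y)"
    and herm: "\<And>y u. y \<in> Y \<Longrightarrow> f y (- u) = cnj (f y u)"
  obtains Y0 where "Y0 \<subseteq> Y" "countable Y0"
    "{\<xi> \<in> dual_group. \<exists>y\<in>Y. cpos (fourier nu (f y) \<xi>)}
       = (\<Union>y\<in>Y0. {\<xi> \<in> dual_group. cpos (fourier nu (f y) \<xi>)})"
proof -
  obtain A where A: "countable A" "\<And>a. a \<in> A \<Longrightarrow> integrable nu a"
    and A_dense: "\<And>g e. integrable nu g \<Longrightarrow> e > 0 \<Longrightarrow> \<exists>a\<in>A. L1_dist nu g a < e"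
    using L2_separable_imp_L1_separable[OF sigma_finite_nu sep] by blast
  have dense: "\<exists>a\<in>A. L1_dist nu (f y) a < e" if "y \<in> Y" "e > 0" for y e
    using A_dense[OF int] that by blast
  have triangle: "L1_dist nu (f y) (f y') \<le> L1_dist nu (f y) a + L1_dist nu (f y') a"
    if "y \<in> Y" "y' \<in> Y" "a \<in> A" for y y' a
    using L1_dist_triangle[OF int A(2) int, of y a y'] that by (simp add: L1_dist_commute)
  obtain Y0 where Y0: "Y0 \<subseteq> Y" "countable Y0"
    and Y0_dense: "\<And>y e. y \<in> Y \<Longrightarrow> e > 0 \<Longrightarrow> \<exists>y'\<in>Y0. L1_dist nu (f y) (f y') < e"
    using countable_dense_subfamily[where \<rho> = "L1_dist nu" and g = f, OF A(1) dense triangle]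
    by blast
  show thesis
  proof (rule that[OF Y0])
    show "{\<xi> \<in> dual_group. \<exists>y\<in>Y. cpos (fourier nu (f y) \<xi>)}
       = (\<Union>y\<in>Y0. {\<xi> \<in> dual_group. cpos (fourier nu (f y) \<xi>)})"
    proof (intro equalityI subsetI)
      fix \<xi> assume "\<xi> \<in> {\<xi> \<in> dual_group. \<exists>y\<in>Y. cpos (fourier nu (f y) \<xi>)}"
      then obtain y where \<xi>: "\<xi> \<in> dual_group" and y: "y \<in> Y" and pos: "cpos (fourier nu (f y) \<xi>)"
        by blast
      obtain y' where y': "y' \<in> Y0" "L1_dist nu (f y) (f y') < Re (fourier nu (f y) \<xi>)"
        using Y0_dense[OF y] pos by (auto simp: cpos_def)
      have "\<bar>Re (fourier nu (f y) \<xi> - fourier nu (f y') \<xi>)\<bar> < Re (fourier nu (f y) \<xi>)"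
        using abs_Re_le_cmod norm_fourier_diff_le[OF int[OF y] int \<xi>, of y'] Y0(1) y'
        by (meson le_less_trans subsetD)
      moreover have "Im (fourier nu (f y') \<xi>) = 0"
        using y' Y0(1) int herm by (intro fourier_real_if_hermitian[OF _ _ \<xi>]) auto
      ultimately show "\<xi> \<in> (\<Union>y\<in>Y0. {\<xi> \<in> dual_group. cpos (fourier nu (f y) \<xi>)})"
        using \<xi> y'(1) by (auto simp: cpos_def)
    qed (use Y0(1) in auto)
  qed
qed

lemma countable_partition_positive_fourier:
  fixes f :: "'y \<Rightarrow> 'g \<Rightarrow> complex"
  assumes sep: "L2_separable nu"
    and int: "\<And>y. y \<in> Y \<Longrightarrow> integrable nu (f y)"
    and herm: "\<And>y u. y \<in> Y \<Longrightarrow> f y (- u) = cnj (f y u)"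
  obtains Y0 Om where "Y0 \<subseteq> Y" "countable Y0" "\<And>y. y \<in> Y0 \<Longrightarrow> Om y \<in> sets (borel_of dual_topology)"
    "disjoint_family_on Om Y0"
    "(\<Union>y\<in>Y0. Om y) = {\<xi> \<in> dual_group. \<exists>y\<in>Y. cpos (fourier nu (f y) \<xi>)}"
    "\<And>y \<xi>. y \<in> Y0 \<Longrightarrow> \<xi> \<in> Om y \<Longrightarrow> cpos (fourier nu (f y) \<xi>)"
proof -
  define P where "P y = {\<xi> \<in> dual_group. cpos (fourier nu (f y) \<xi>)}" for y
  obtain Y0 where Y0: "Y0 \<subseteq> Y" "countable Y0"
    and cover: "{\<xi> \<in> dual_group. \<exists>y\<in>Y. cpos (fourier nu (f y) \<xi>)} = (\<Union>y\<in>Y0. P y)"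
    unfolding P_def using countable_cover_positive_fourier[where Y = Y and f = f, OF sep int herm]
    by blast
  have P_sets: "P y \<in> sets (borel_of dual_topology)" if "y \<in> Y0" for y
    unfolding P_def using that Y0(1) by (intro sets_positive_fourier int) auto
  obtain Om where Om: "\<And>y. y \<in> Y0 \<Longrightarrow> Om y \<in> sets (borel_of dual_topology)"
    "\<And>y. y \<in> Y0 \<Longrightarrow> Om y \<subseteq> P y" "disjoint_family_on Om Y0" "(\<Union>y\<in>Y0. Om y) = (\<Union>y\<in>Y0. P y)"
    using countable_disjointification[where P = P and M = "borel_of dual_topology", OF Y0(2) P_sets]
    by blast
  show thesis
  proof (rule that[OF Y0 Om(1,3)])
    show "(\<Union>y\<in>Y0. Om y) = {\<xi> \<in> dual_group. \<exists>y\<in>Y. cpos (fourier nu (f y) \<xi>)}"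
      using Om(4) cover by simp
    show "cpos (fourier nu (f y) \<xi>)" if "y \<in> Y0" "\<xi> \<in> Om y" for y \<xi>
      using Om(2) that by (auto simp: P_def)
  qed
qed

end

section \<open>Translation invariant reproducing kernels\<close>

lemma rkhs_in_L2_kernel_measurable:
  assumes "rkhs_in_L2 M H K" "p \<in> space M"
  shows "K p \<in> borel_measurable M"
  using assms by (simp add: rkhs_in_L2_def square_integrable_def)

lemma rkhs_in_L2_kernel_hermitian:
  assumes rk: "rkhs_in_L2 M H K" and p: "p \<in> space M" and q: "q \<in> space M"
  shows "K p q = cnj (K q p)"
proof -
  have "K p q = L2_inner M (K p) (K q)" "K q p = L2_inner M (K q) (K p)"
    using rk p q by (auto simp: rkhs_in_L2_def)
  then show ?thesis
    by (simp add: L2_inner_def Bochner_Integration.integral_cnj[symmetric] mult.commute)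
qed

context haar_lca
begin

lemma integrable_kernel_section:
  assumes rk: "rkhs_in_L2 (nu \<Otimes>\<^sub>M lam) H K" and p: "p \<in> space (nu \<Otimes>\<^sub>M lam)"
    and v: "v \<in> space lam" and fin: "(\<integral>\<^sup>+u. ennreal (norm (K p (u, v))) \<partial>nu) < \<infinity>"
  shows "integrable nu (\<lambda>u. K p (u, v))"
proof -
  have "(\<lambda>u. K p (u, v)) \<in> borel_measurable nu"
    using measurable_compose[OF measurable_Pair2'[OF v] rkhs_in_L2_kernel_measurable[OF rk p]] by simp
  then show ?thesis using fin by (simp add: integrable_iff_bounded)
qed

lemma translation_kernel_hermitian:
  assumes rk: "rkhs_in_L2 (nu \<Otimes>\<^sub>M lam) H K" and y: "y \<in> space lam"
    and transl: "\<And>x u. K (x, y) (u, y) = K (0, y) (u - x, y)"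
  shows "K (0, y) (- u, y) = cnj (K (0, y) (u, y))"
  using transl[of u 0] rkhs_in_L2_kernel_hermitian[OF rk, of "(u, y)" "(0, y)"] y
  by (simp add: space_pair_measure)

end

theorem proposition3p4:
  fixes nu :: "'g::{ab_group_add, metric_space} measure"
    and lam :: "'y measure"
    and H :: "('g \<times> 'y \<Rightarrow> complex) set"
    and K :: "'g \<times> 'y \<Rightarrow> 'g \<times> 'y \<Rightarrow> complex"
  assumes G: "metrizable_sigma_compact_lca TYPE('g)"
    and haar: "haar_measure nu"
    and sf: "sigma_finite_measure lam"
    and sepG: "L2_separable nu"
    and sepY: "L2_separable lam"
    and rk: "rkhs_in_L2 (nu \<Otimes>\<^sub>M lam) H K"
    and transl: "\<And>u x v y. v \<in> space lam \<Longrightarrow> y \<in> space lam \<Longrightarrow>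
                   K (x, y) (u, v) = K (0, y) (u - x, v)"
    and bdd: "\<And>y. y \<in> space lam \<Longrightarrow>
                \<exists>C::real. \<forall>v\<in>space lam. (\<integral>\<^sup>+ u. ennreal (cmod (K (0, y) (u, v))) \<partial>nu) \<le> ennreal C"
  shows "\<exists>Y0 Om. Y0 \<subseteq> space lam \<and> countable Y0 \<and>
           (\<forall>y\<in>Y0. Om y \<in> sets (borel_of dual_topology)) \<and>
           (\<forall>y\<in>Y0. \<forall>y'\<in>Y0. y \<noteq> y' \<longrightarrow> Om y \<inter> Om y' = {}) \<and>
           (\<Union>y\<in>Y0. Om y) = Omega_set nu lam K \<and>
           (\<forall>y\<in>Y0. \<forall>\<xi>\<in>Om y. cpos (Lfun nu K \<xi> y y))"
proof -
  interpret haar_lca nu by (rule haar_lca.intro[OF G haar])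
  define k where "k y = (\<lambda>u. K (0, y) (u, y))" for y
  have k_int: "integrable nu (k y)" if y: "y \<in> space lam" for y
  proof -
    obtain c :: real where c: "\<forall>v\<in>space lam. (\<integral>\<^sup>+u. ennreal (norm (K (0, y) (u, v))) \<partial>nu) \<le> ennreal c"
      using bdd[OF y] by blast
    have "(\<integral>\<^sup>+u. ennreal (norm (K (0, y) (u, y))) \<partial>nu) < \<infinity>"
      using c y by (auto intro: le_less_trans)
    then show ?thesis
      unfolding k_def using y by (intro integrable_kernel_section[OF rk]) (auto simp: space_pair_measure)
  qed
  have k_herm: "k y (- u) = cnj (k y u)" if "y \<in> space lam" for y u
    unfolding k_def by (rule translation_kernel_hermitian[OF rk that transl[OF that that]])
  obtain Y0 Om where Y0: "Y0 \<subseteq> space lam" "countable Y0"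
    and Om: "\<And>y. y \<in> Y0 \<Longrightarrow> Om y \<in> sets (borel_of dual_topology)" "disjoint_family_on Om Y0"
    and union: "(\<Union>y\<in>Y0. Om y) = {\<xi> \<in> dual_group. \<exists>y\<in>space lam. cpos (fourier nu (k y) \<xi>)}"
    and pos: "\<And>y \<xi>. y \<in> Y0 \<Longrightarrow> \<xi> \<in> Om y \<Longrightarrow> cpos (fourier nu (k y) \<xi>)"
    using countable_partition_positive_fourier[where Y = "space lam" and f = k, OF sepG k_int k_herm]
    by blast
  have "(\<Union>y\<in>Y0. Om y) = Omega_set nu lam K"
    unfolding union by (simp add: Omega_set_def Lfun_eq_fourier k_def)
  moreover have "\<forall>y\<in>Y0. \<forall>\<xi>\<in>Om y. cpos (Lfun nu K \<xi> y y)"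
    using pos by (simp add: Lfun_eq_fourier k_def)
  ultimately show ?thesis
    using Y0 Om by (intro exI[of _ Y0] exI[of _ Om] conjI) (auto simp: disjoint_family_on_def)
qed

end
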